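(* Let $\mathcal{G}_1$ be an $r_1$-regular graph on $n_1$ vertices and $\mathcal{G}_2$ an $r_2$-regular graph on $n_2$ vertices. Let $\nu_{11},\nu_{12},\ldots,\nu_{1n_1}$ be the signless Laplacian eigenvalues of $\mathcal{G}_1$. Then the signless Laplacian characteristic polynomial of $\mathcal{G}_1\circledast\mathcal{G}_2$ satisfies $$f(Q_{\mathcal{G}_1\circledast \mathcal{G}_2},x)=(x-r_1n_2-n_2)^{n_1(n_2-1)}\, f(Q_{\mathcal{G}_2},x-n_2)^{n_1}\cdot \prod_{i=1}^{n_1}\big[x-n_2-n_2\nu_{1i}-n_2\chi_{Q_{\mathcal{G}_2}}(x-n_2)\big].$$
   Context: All graphs are simple, finite and undirected. For a graph $\mathcal{G}$ with adjacency matrix $A_{\mathcal{G}}$ and diagonal degree matrix $D_{\mathcal{G}}$, the signless Laplacian matrix is $Q_{\mathcal{G}}=D_{\mathcal{G}}+A_{\mathcal{G}}$. For a square matrix $M$, $f(M,x)=\det(xI-M)$. The signless Laplacian coronal of a graph $\mathcal{G}$ on $n$ vertices is the rational function $\chi_{Q_{\mathcal{G}}}(x)=\mathbf{1}_n^T(xI_n-Q_{\mathcal{G}})^{-1}\mathbf{1}_n$, with $\mathbf{1}_n$ the all-ones column vector. The graph product $\mathcal{G}_1\circledast\mathcal{G}_2$ of $\mathcal{G}_1$ (vertices $u_1,\ldots,u_{n_1}$) and $\mathcal{G}_2$ (vertices $v_1,\ldots,v_{n_2}$) has vertex set $\{a_{ik},b_{ik}:1\le i\le n_1,1\le k\le n_2\}$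 and edges: (1) $a_{ik}a_{jl}$ for all $1\le k,l\le n_2$ whenever $u_iu_j\in E(\mathcal{G}_1)$; (2) $b_{ri}b_{rj}$ for all $1\le r\le n_1$ whenever $v_iv_j\in E(\mathcal{G}_2)$; (3) $a_{ip}b_{iq}$ for all $1\le i\le n_1$, $1\le p,q\le n_2$. The identity is one of rational functions in $x$. *)

theory Defs
  imports "Jordan_Normal_Form.Matrix" "Jordan_Normal_Form.Determinant"
    "Jordan_Normal_Form.Char_Poly" "Jordan_Normal_Form.Gauss_Jordan_Elimination"
begin

definition simple_graph :: "nat \<Rightarrow> (nat \<Rightarrow> nat \<Rightarrow> bool) \<Rightarrow> bool" where
  "simple_graph n E \<longleftrightarrow> (\<forall>i<n. \<forall>j<n. E i j \<longleftrightarrow> E j i) \<and> (\<forall>i<n. \<not> E i i)"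

definition degree :: "nat \<Rightarrow> (nat \<Rightarrow> nat \<Rightarrow> bool) \<Rightarrow> nat \<Rightarrow> nat" where
  "degree n E i = card {j. j < n \<and> E i j}"

definition regular_graph :: "nat \<Rightarrow> (nat \<Rightarrow> nat \<Rightarrow> bool) \<Rightarrow> nat \<Rightarrow> bool" where
  "regular_graph n E r \<longleftrightarrow> simple_graph n E \<and> (\<forall>i<n. degree n E i = r)"

definition adj_matrix :: "nat \<Rightarrow> (nat \<Rightarrow> nat \<Rightarrow> bool) \<Rightarrow> real mat" where
  "adj_matrix n E = mat n n (\<lambda>(i,j). if E i j then 1 else 0)"

definition deg_matrix :: "nat \<Rightarrow> (nat \<Rightarrow> nat \<Rightarrow> bool) \<Rightarrow> real mat" where
  "deg_matrix n E = mat_diag n (\<lambda>i. real (degree n E i))"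

definition signless_laplacian :: "nat \<Rightarrow> (nat \<Rightarrow> nat \<Rightarrow> bool) \<Rightarrow> real mat" where
  "signless_laplacian n E = deg_matrix n E + adj_matrix n E"

definition charf :: "real mat \<Rightarrow> real \<Rightarrow> real" where
  "charf M x = det (x \<cdot>\<^sub>m 1\<^sub>m (dim_row M) - M)"

text \<open>Coronal 1^T (xI - M)^{-1} 1 (meaningful where xI - M is invertible).\<close>
definition coronal :: "real mat \<Rightarrow> real \<Rightarrow> real" where
  "coronal M x = (case mat_inverse (x \<cdot>\<^sub>m 1\<^sub>m (dim_row M) - M) of
      Some B \<Rightarrow> (\<Sum>i<dim_row M. \<Sum>j<dim_row M. B $$ (i,j))
    | None \<Rightarrow> 0)"

text \<open>The product G1 (*) G2 on vertex set {0..<2*n1*n2}: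
  a_{ik} \<mapsto> i*n2 + k, b_{ik} \<mapsto> n1*n2 + i*n2 + k (0-indexed, i<n1, k<n2).\<close>
definition prod_edge :: "nat \<Rightarrow> (nat \<Rightarrow> nat \<Rightarrow> bool) \<Rightarrow> nat \<Rightarrow> (nat \<Rightarrow> nat \<Rightarrow> bool)
    \<Rightarrow> nat \<Rightarrow> nat \<Rightarrow> bool" where
  "prod_edge n1 E1 n2 E2 u v \<longleftrightarrow>
     (\<exists>i<n1. \<exists>j<n1. \<exists>k<n2. \<exists>l<n2. E1 i j \<and> u = i*n2 + k \<and> v = j*n2 + l)
   \<or> (\<exists>r<n1. \<exists>i<n2. \<exists>j<n2. E2 i j \<and> u = n1*n2 + r*n2 + i \<and> v = n1*n2 + r*n2 + j)
   \<or> (\<exists>i<n1. \<exists>p<n2. \<exists>q<n2. (u = i*n2 + p \<and> v = n1*n2 + i*n2 + q)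
                            \<or> (v = i*n2 + p \<and> u = n1*n2 + i*n2 + q))"

end

theory Submission
  imports Defs
begin

text \<open>Order the vertices as all a_ik followed by all b_ik and let J be the all-ones
  n2 \<times> n2 matrix. Regularity makes the degrees constant on both halves, so
  x I - Q = [[a I - A1 \<otimes> J, - I \<otimes> J], [- I \<otimes> J, I \<otimes> M]] with a = x - r1 n2 - n2,
  M = (x - n2) I - Q2 and A1 the adjacency matrix of G1. The Schur complement of the invertible
  block I \<otimes> M gives det M ^ n1 \<cdot> det (a I - A1 \<otimes> J - I \<otimes> J M^-1 J), and J M^-1 J = \<chi> J where
  \<chi> is the coronal of Q2 at x - n2. The remaining matrix is a I - (A1 + \<chi> I) \<otimes> J = a I - U V
  with U = I \<otimes> 1 and V U = n2 (A1 + \<chi> I), so Sylvester's identity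
  det (a I - U V) = a ^ (n1 n2 - n1) det (a I - V U) reduces it to an n1 \<times> n1 determinant,
  which is evaluated through the eigenvalues of Q1 = r1 I + A1.\<close>

section \<open>Block determinants and Sylvester's identity\<close>

lemma det_four_block_mat_schur_lower_right:
  fixes A :: "'a::idom mat"
  assumes A: "A \<in> carrier_mat n n" and B: "B \<in> carrier_mat n m"
    and C: "C \<in> carrier_mat m n" and D: "D \<in> carrier_mat m m"
    and Di: "Di \<in> carrier_mat m m" and D_Di: "D * Di = 1\<^sub>m m"
  shows "det (four_block_mat A B C D) = det D * det (A - B * Di * C)"
proof -
  let ?L = "four_block_mat (1\<^sub>m n) (0\<^sub>m n m) (- (Di * C)) (1\<^sub>m m)"
  have "B * - (Di * C) = - (B * Di * C)"
    using B Di C by simp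
  moreover have "D * - (Di * C) = - C"
    using D Di C D_Di by (simp add: assoc_mult_mat[symmetric])
  ultimately have "four_block_mat A B C D * ?L = four_block_mat (A - B * Di * C) B (0\<^sub>m m n) D"
    using A B C D Di by (subst mult_four_block_mat) (auto simp: minus_add_uminus_mat)
  moreover have "det (four_block_mat A B C D * ?L) = det (four_block_mat A B C D) * det ?L"
    using A B C D Di by (intro det_mult[of _ "n + m"]) auto
  moreover have "det (four_block_mat (A - B * Di * C) B (0\<^sub>m m n) D) = det (A - B * Di * C) * det D"
    using A B C D Di by (intro det_four_block_mat_lower_left_zero[of _ n _ m]) auto
  moreover have "det ?L = 1"
    using Di C by (subst det_four_block_mat_upper_right_zero) auto
  ultimately show ?thesis by (simp add: mult.commute)
qed

lemma det_four_block_mat_schur_upper_left: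
  fixes A :: "'a::idom mat"
  assumes A: "A \<in> carrier_mat n n" and B: "B \<in> carrier_mat n m"
    and C: "C \<in> carrier_mat m n" and D: "D \<in> carrier_mat m m"
    and Ai: "Ai \<in> carrier_mat n n" and A_Ai: "A * Ai = 1\<^sub>m n"
  shows "det (four_block_mat A B C D) = det A * det (D - C * Ai * B)"
proof -
  let ?R = "four_block_mat (1\<^sub>m n) (- (Ai * B)) (0\<^sub>m m n) (1\<^sub>m m)"
  have "C * - (Ai * B) = - (C * Ai * B)"
    using B Ai C by simp
  moreover have "A * - (Ai * B) = - B"
    using A Ai B A_Ai by (simp add: assoc_mult_mat[symmetric])
  ultimately have "four_block_mat A B C D * ?R = four_block_mat A (0\<^sub>m n m) C (D - C * Ai * B)"
    using A B C D Ai by (subst mult_four_block_mat) (auto simp: minus_add_uminus_mat)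
  moreover have "det (four_block_mat A B C D * ?R) = det (four_block_mat A B C D) * det ?R"
    using A B C D Ai by (intro det_mult[of _ "n + m"]) auto
  moreover have "det (four_block_mat A (0\<^sub>m n m) C (D - C * Ai * B)) = det A * det (D - C * Ai * B)"
    using A B C D Ai by (intro det_four_block_mat_upper_right_zero[of _ n _ m]) auto
  moreover have "det ?R = 1"
    using Ai B by (subst det_four_block_mat_lower_left_zero) auto
  ultimately show ?thesis by simp
qed

lemma poly_char_poly:
  assumes "A \<in> carrier_mat n n"
  shows "poly (char_poly A) a = det (a \<cdot>\<^sub>m 1\<^sub>m n - A)"
  unfolding char_poly_def
  by (rule poly_det_cong[of _ n]) (use assms in \<open>auto simp: char_poly_matrix_def\<close>)

text \<open>Sylvester's determinant identity. For a \<noteq> 0 both sides are Schur complements of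
  [[a I, U], [V, I]]; the case a = 0 follows because both sides are polynomials in a.\<close>

lemma det_smult_one_minus_mult_swap:
  fixes U :: "'a::field_char_0 mat"
  assumes U: "U \<in> carrier_mat N m" and V: "V \<in> carrier_mat m N" and "m \<le> N"
  shows "det (a \<cdot>\<^sub>m 1\<^sub>m N - U * V) = a ^ (N - m) * det (a \<cdot>\<^sub>m 1\<^sub>m m - V * U)"
proof -
  have nonzero: "det (b \<cdot>\<^sub>m 1\<^sub>m N - U * V) = b ^ (N - m) * det (b \<cdot>\<^sub>m 1\<^sub>m m - V * U)"
    if b: "b \<noteq> 0" for b
  proof -
    let ?K = "four_block_mat (b \<cdot>\<^sub>m 1\<^sub>m N) U V (1\<^sub>m m)"
    have "det ?K = det (b \<cdot>\<^sub>m 1\<^sub>m N - U * V)"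
      using det_four_block_mat_schur_lower_right[of _ N U m V "1\<^sub>m m" "1\<^sub>m m"] U V by simp
    moreover have "b \<cdot>\<^sub>m 1\<^sub>m N * ((1 / b) \<cdot>\<^sub>m 1\<^sub>m N) = (1\<^sub>m N :: 'a mat)"
      using b by (subst mult_smult_distrib[of _ N N]) auto
    then have "det ?K = b ^ N * det (1\<^sub>m m - V * ((1 / b) \<cdot>\<^sub>m 1\<^sub>m N) * U)"
      using det_four_block_mat_schur_upper_left[of _ N U m V _ "(1 / b) \<cdot>\<^sub>m 1\<^sub>m N"] U V
      by simp
    moreover have "V * ((1 / b) \<cdot>\<^sub>m 1\<^sub>m N) * U = (1 / b) \<cdot>\<^sub>m (V * U)"
      using mult_smult_distrib[OF V one_carrier_mat, of "1 / b"] mult_smult_assoc_mat[OF V U] V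
      by simp
    moreover have "b \<cdot>\<^sub>m 1\<^sub>m m - V * U = b \<cdot>\<^sub>m (1\<^sub>m m - (1 / b) \<cdot>\<^sub>m (V * U))"
      using U V b by (intro eq_matI) (auto simp: field_simps)
    moreover have "b ^ (N - m) * b ^ m = b ^ N"
      using \<open>m \<le> N\<close> by (simp flip: power_add)
    ultimately show ?thesis
      using U V by (simp add: mult.assoc[symmetric])
  qed
  define p where "p = char_poly (U * V) - monom 1 (N - m) * char_poly (V * U)"
  have poly_p: "poly p b = det (b \<cdot>\<^sub>m 1\<^sub>m N - U * V) - b ^ (N - m) * det (b \<cdot>\<^sub>m 1\<^sub>m m - V * U)" for b
    using U V by (simp add: p_def poly_char_poly[of _ N] poly_char_poly[of _ m] poly_monom)
  have "UNIV - {0} \<subseteq> {b. poly p b = 0}"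
    using nonzero poly_p by auto
  moreover have "infinite (UNIV - {0::'a})"
    by (simp add: infinite_UNIV_char_0)
  ultimately have "p = 0"
    using poly_roots_finite finite_subset by blast
  then show ?thesis
    using poly_p[of a] by simp
qed

lemma det_smult_one_minus_smult_eq_prod:
  fixes A :: "'a::field mat"
  assumes A: "A \<in> carrier_mat n n" and eig: "char_poly A = (\<Prod>i<n. [:- \<nu> i, 1:])" and "s \<noteq> 0"
  shows "det (c \<cdot>\<^sub>m 1\<^sub>m n - s \<cdot>\<^sub>m A) = (\<Prod>i<n. c - s * \<nu> i)"
proof -
  have "c \<cdot>\<^sub>m 1\<^sub>m n - s \<cdot>\<^sub>m A = s \<cdot>\<^sub>m ((c / s) \<cdot>\<^sub>m 1\<^sub>m n - A)"
    using A \<open>s \<noteq> 0\<close> by (intro eq_matI) (auto simp: field_simps)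
  then have "det (c \<cdot>\<^sub>m 1\<^sub>m n - s \<cdot>\<^sub>m A) = s ^ n * poly (char_poly A) (c / s)"
    using A by (simp add: poly_char_poly)
  also have "\<dots> = (\<Prod>i<n. s * (c / s - \<nu> i))"
    by (simp add: eig poly_prod prod.distrib)
  also have "\<dots> = (\<Prod>i<n. c - s * \<nu> i)"
    using \<open>s \<noteq> 0\<close> by (simp add: right_diff_distrib)
  finally show ?thesis .
qed

section \<open>Kronecker products\<close>

lemma index_mult_add_less:
  fixes i k m n :: nat
  assumes "i < m" and "k < n"
  shows "i * n + k < m * n"
proof -
  have "i * n + k < Suc i * n" using assms by simp
  also have "\<dots> \<le> m * n" using assms by (intro mult_le_mono1) simp
  finally show ?thesis .
qed

lemma div_mod_less_mult:
  fixes u m n :: nat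
  assumes "u < m * n"
  shows "u div n < m" and "u mod n < n"
proof -
  show "u div n < m" using assms by (rule less_mult_imp_div_less)
  have "n > 0" using assms by (cases n) auto
  then show "u mod n < n" by simp
qed

lemma div_mod_eq_imp_eq: "u div n = v div n \<Longrightarrow> u mod n = v mod n \<Longrightarrow> u = (v::nat)"
  by (metis div_mult_mod_eq)

lemma sum_atLeast0LessThan_mult:
  fixes m n :: nat
  shows "(\<Sum>w\<in>{0..<m * n}. f w) = (\<Sum>i\<in>{0..<m}. \<Sum>k\<in>{0..<n}. f (i * n + k))"
proof -
  have "sum f {i * n..<i * n + n} = (\<Sum>k\<in>{0..<n}. f (i * n + k))" for i
    using sum.shift_bounds_nat_ivl[of f 0 "i * n" n] by (simp add: add.commute)
  then show ?thesis
    by (simp add: atLeast0LessThan flip: sum.nat_group)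
qed

lemma sum_atLeast0LessThan_add:
  fixes m n :: nat
  shows "(\<Sum>w\<in>{0..<m + n}. f w) = (\<Sum>w\<in>{0..<m}. f w) + (\<Sum>w\<in>{0..<n}. f (m + w))"
  using sum.atLeastLessThan_concat[of 0 m "m + n" f] sum.shift_bounds_nat_ivl[of f 0 m n]
  by (simp add: add.commute)

lemma sum_row_four_block_mat:
  assumes "A \<in> carrier_mat m k" and "B \<in> carrier_mat m l"
    and "C \<in> carrier_mat n k" and "D \<in> carrier_mat n l"
  shows "i < m \<Longrightarrow> (\<Sum>j\<in>{0..<k + l}. four_block_mat A B C D $$ (i, j))
      = (\<Sum>j\<in>{0..<k}. A $$ (i, j)) + (\<Sum>j\<in>{0..<l}. B $$ (i, j))"
    and "i < n \<Longrightarrow> (\<Sum>j\<in>{0..<k + l}. four_block_mat A B C D $$ (m + i, j))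
      = (\<Sum>j\<in>{0..<k}. C $$ (i, j)) + (\<Sum>j\<in>{0..<l}. D $$ (i, j))"
  unfolding sum_atLeast0LessThan_add using assms by (auto intro!: arg_cong2[where f = "(+)"] sum.cong)

definition kronecker_mat :: "'a::times mat \<Rightarrow> 'a mat \<Rightarrow> 'a mat" (infixl "\<otimes>\<^sub>m" 70) where
  "A \<otimes>\<^sub>m B = mat (dim_row A * dim_row B) (dim_col A * dim_col B)
     (\<lambda>(i, j). A $$ (i div dim_row B, j div dim_col B) * B $$ (i mod dim_row B, j mod dim_col B))"

lemma dim_kronecker_mat[simp]:
  "dim_row (A \<otimes>\<^sub>m B) = dim_row A * dim_row B"
  "dim_col (A \<otimes>\<^sub>m B) = dim_col A * dim_col B"
  by (simp_all add: kronecker_mat_def)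

lemma kronecker_carrier_mat[simp]:
  "A \<in> carrier_mat m n \<Longrightarrow> B \<in> carrier_mat p q \<Longrightarrow> A \<otimes>\<^sub>m B \<in> carrier_mat (m * p) (n * q)"
  by (intro carrier_matI) auto

lemma index_kronecker_mat[simp]:
  "i < dim_row A * dim_row B \<Longrightarrow> j < dim_col A * dim_col B \<Longrightarrow>
   (A \<otimes>\<^sub>m B) $$ (i, j) = A $$ (i div dim_row B, j div dim_col B) * B $$ (i mod dim_row B, j mod dim_col B)"
  by (simp add: kronecker_mat_def)

lemma mult_kronecker_mat:
  fixes A :: "'a::comm_semiring_0 mat"
  assumes A: "A \<in> carrier_mat m n" and B: "B \<in> carrier_mat p q"
    and C: "C \<in> carrier_mat n r" and D: "D \<in> carrier_mat q s"
  shows "(A \<otimes>\<^sub>m B) * (C \<otimes>\<^sub>m D) = (A * C) \<otimes>\<^sub>m (B * D)"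
proof (rule eq_matI)
  fix u v assume "u < dim_row ((A * C) \<otimes>\<^sub>m (B * D))" "v < dim_col ((A * C) \<otimes>\<^sub>m (B * D))"
  then have u: "u < m * p" and v: "v < r * s" using A B C D by auto
  have "((A \<otimes>\<^sub>m B) * (C \<otimes>\<^sub>m D)) $$ (u, v)
      = (\<Sum>w\<in>{0..<n * q}. (A \<otimes>\<^sub>m B) $$ (u, w) * (C \<otimes>\<^sub>m D) $$ (w, v))"
    using A B C D u v by (simp add: scalar_prod_def)
  also have "\<dots> = (\<Sum>i\<in>{0..<n}. \<Sum>k\<in>{0..<q}.
      (A $$ (u div p, i) * C $$ (i, v div s)) * (B $$ (u mod p, k) * D $$ (k, v mod s)))"
    using A B C D u v
    by (auto simp: sum_atLeast0LessThan_mult index_mult_add_less mult_ac intro!: sum.cong)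
  also have "\<dots> = ((A * C) \<otimes>\<^sub>m (B * D)) $$ (u, v)"
    using A B C D u v by (simp add: scalar_prod_def sum_product div_mod_less_mult)
  finally show "((A \<otimes>\<^sub>m B) * (C \<otimes>\<^sub>m D)) $$ (u, v) = ((A * C) \<otimes>\<^sub>m (B * D)) $$ (u, v)" .
qed (use A B C D in auto)

lemma one_kronecker_one_mat[simp]: "1\<^sub>m m \<otimes>\<^sub>m 1\<^sub>m n = (1\<^sub>m (m * n) :: 'a::semiring_1 mat)"
  by (rule eq_matI) (auto simp: div_mod_less_mult dest: div_mod_eq_imp_eq)

lemma smult_kronecker_mat_right[simp]: "A \<otimes>\<^sub>m (c \<cdot>\<^sub>m B) = c \<cdot>\<^sub>m (A \<otimes>\<^sub>m B :: 'a::comm_semiring_0 mat)"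
  by (rule eq_matI) (simp_all add: div_mod_less_mult mult_ac)

lemma sum_row_kronecker_mat:
  fixes A :: "'a::comm_semiring_0 mat"
  assumes "A \<in> carrier_mat m n" and "B \<in> carrier_mat p q" and "u < m * p"
  shows "(\<Sum>w\<in>{0..<n * q}. (A \<otimes>\<^sub>m B) $$ (u, w))
    = (\<Sum>i\<in>{0..<n}. A $$ (u div p, i)) * (\<Sum>k\<in>{0..<q}. B $$ (u mod p, k))"
  using assms by (simp add: sum_atLeast0LessThan_mult sum_product index_mult_add_less mult_ac)

lemma det_one_kronecker_mat:
  fixes M :: "'a::idom mat"
  assumes M: "M \<in> carrier_mat n n"
  shows "det (1\<^sub>m k \<otimes>\<^sub>m M) = det M ^ k"
proof (induction k)
  case 0
  have "1\<^sub>m 0 \<otimes>\<^sub>m M = 1\<^sub>m 0" by (rule eq_matI) auto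
  then show ?case by simp
next
  case (Suc k)
  have "1\<^sub>m (Suc k) \<otimes>\<^sub>m M = four_block_mat M (0\<^sub>m n (k * n)) (0\<^sub>m (k * n) n) (1\<^sub>m k \<otimes>\<^sub>m M)"
  proof (rule eq_matI)
    fix i j assume "i < dim_row (four_block_mat M (0\<^sub>m n (k * n)) (0\<^sub>m (k * n) n) (1\<^sub>m k \<otimes>\<^sub>m M))"
      and "j < dim_col (four_block_mat M (0\<^sub>m n (k * n)) (0\<^sub>m (k * n) n) (1\<^sub>m k \<otimes>\<^sub>m M))"
    with M have i: "i < n + k * n" and j: "j < n + k * n" by auto
    then have "0 < n" by (cases n) auto
    have shift: "l div n = Suc ((l - n) div n)" "l mod n = (l - n) mod n" if "n \<le> l" for l
      using that \<open>0 < n\<close> by (simp_all add: le_div_geq le_mod_geq)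
    have bound: "(l - n) div n < k" if "l < n + k * n" "n \<le> l" for l
      using that by (intro less_mult_imp_div_less) linarith
    show "(1\<^sub>m (Suc k) \<otimes>\<^sub>m M) $$ (i, j)
      = four_block_mat M (0\<^sub>m n (k * n)) (0\<^sub>m (k * n) n) (1\<^sub>m k \<otimes>\<^sub>m M) $$ (i, j)"
      using i j M \<open>0 < n\<close> shift bound by (cases "i < n"; cases "j < n") simp_all
  qed (use M in auto)
  then show ?case
    using Suc M by (simp add: det_four_block_mat_lower_left_zero[of M n _ "k * n"])
qed

section \<open>All-ones blocks and the coronal\<close>

lemma one_smult_mat[simp]: "(1 :: 'a::monoid_mult) \<cdot>\<^sub>m A = A"
  by (rule eq_matI) simp_all

definition all_ones_mat :: "nat \<Rightarrow> nat \<Rightarrow> 'a::one mat" where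
  "all_ones_mat m n = mat m n (\<lambda>_. 1)"

lemma all_ones_carrier_mat[simp]: "all_ones_mat m n \<in> carrier_mat m n"
  by (simp add: all_ones_mat_def)

lemma dim_all_ones_mat[simp]: "dim_row (all_ones_mat m n) = m" "dim_col (all_ones_mat m n) = n"
  by (simp_all add: all_ones_mat_def)

lemma index_all_ones_mat[simp]: "i < m \<Longrightarrow> j < n \<Longrightarrow> all_ones_mat m n $$ (i, j) = 1"
  by (simp add: all_ones_mat_def)

lemma mult_all_ones_mat:
  "all_ones_mat m n * all_ones_mat n p = of_nat n \<cdot>\<^sub>m (all_ones_mat m p :: 'a::semiring_1 mat)"
  by (rule eq_matI) (simp_all add: all_ones_mat_def scalar_prod_def)

lemma all_ones_mat_mult_mult_all_ones_mat:
  fixes M :: "'a::semiring_1 mat"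
  assumes "M \<in> carrier_mat n n'"
  shows "all_ones_mat m n * M * all_ones_mat n' p
    = (\<Sum>i<n. \<Sum>j<n'. M $$ (i, j)) \<cdot>\<^sub>m all_ones_mat m p"
  using assms
  by (intro eq_matI) (auto simp: all_ones_mat_def scalar_prod_def atLeast0LessThan intro: sum.swap)

lemma kronecker_all_ones_1_1[simp]: "A \<otimes>\<^sub>m all_ones_mat 1 1 = (A :: 'a::semiring_1 mat)"
  by (rule eq_matI) (simp_all add: all_ones_mat_def)

lemma one_kronecker_all_ones_sandwich:
  fixes M :: "'a::comm_semiring_1 mat"
  assumes M: "M \<in> carrier_mat n n"
  shows "(1\<^sub>m k \<otimes>\<^sub>m all_ones_mat n n) * (1\<^sub>m k \<otimes>\<^sub>m M) * (1\<^sub>m k \<otimes>\<^sub>m all_ones_mat n n)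
    = (\<Sum>i<n. \<Sum>j<n. M $$ (i, j)) \<cdot>\<^sub>m (1\<^sub>m k \<otimes>\<^sub>m all_ones_mat n n)"
proof -
  note J = all_ones_carrier_mat[of n n]
  have "(1\<^sub>m k \<otimes>\<^sub>m all_ones_mat n n) * (1\<^sub>m k \<otimes>\<^sub>m M) * (1\<^sub>m k \<otimes>\<^sub>m all_ones_mat n n)
      = 1\<^sub>m k \<otimes>\<^sub>m (all_ones_mat n n * M * all_ones_mat n n)"
    using mult_kronecker_mat[OF one_carrier_mat J one_carrier_mat M]
      mult_kronecker_mat[OF one_carrier_mat mult_carrier_mat[OF J M] one_carrier_mat J]
    by simp
  then show ?thesis
    using M by (simp add: all_ones_mat_mult_mult_all_ones_mat)
qed

lemma det_smult_one_minus_kronecker_all_ones: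
  fixes B :: "'a::field_char_0 mat"
  assumes B: "B \<in> carrier_mat m m" and "0 < n"
  shows "det (a \<cdot>\<^sub>m 1\<^sub>m (m * n) - B \<otimes>\<^sub>m all_ones_mat n n)
    = a ^ (m * (n - 1)) * det (a \<cdot>\<^sub>m 1\<^sub>m m - of_nat n \<cdot>\<^sub>m B)"
proof -
  define U where "U = 1\<^sub>m m \<otimes>\<^sub>m (all_ones_mat n 1 :: 'a mat)"
  define V where "V = B \<otimes>\<^sub>m (all_ones_mat 1 n :: 'a mat)"
  have U: "U \<in> carrier_mat (m * n) m" and V: "V \<in> carrier_mat m (m * n)"
    using B by (auto simp: U_def V_def)
  have "U * V = B \<otimes>\<^sub>m all_ones_mat n n"
    using mult_kronecker_mat[OF one_carrier_mat all_ones_carrier_mat[of n 1] B all_ones_carrier_mat[of 1 n]] B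
    by (simp add: U_def V_def mult_all_ones_mat)
  moreover have "V * U = of_nat n \<cdot>\<^sub>m B"
    using mult_kronecker_mat[OF B all_ones_carrier_mat[of 1 n] one_carrier_mat all_ones_carrier_mat[of n 1]] B
    by (simp add: U_def V_def mult_all_ones_mat kronecker_all_ones_1_1[unfolded One_nat_def])
  moreover have "m * n - m = m * (n - 1)"
    by (simp add: diff_mult_distrib2)
  ultimately show ?thesis
    using det_smult_one_minus_mult_swap[OF U V, of a] \<open>0 < n\<close> by simp
qed

lemma det_four_block_kronecker_all_ones:
  fixes A M Mi :: "'a::field_char_0 mat"
  assumes A: "A \<in> carrier_mat n1 n1" and M: "M \<in> carrier_mat n2 n2"
    and Mi: "Mi \<in> carrier_mat n2 n2" and M_Mi: "M * Mi = 1\<^sub>m n2" and "0 < n2"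
  shows "det (four_block_mat (a \<cdot>\<^sub>m 1\<^sub>m (n1 * n2) - A \<otimes>\<^sub>m all_ones_mat n2 n2)
      (- (1\<^sub>m n1 \<otimes>\<^sub>m all_ones_mat n2 n2)) (- (1\<^sub>m n1 \<otimes>\<^sub>m all_ones_mat n2 n2)) (1\<^sub>m n1 \<otimes>\<^sub>m M))
    = det M ^ n1 * a ^ (n1 * (n2 - 1))
      * det ((a - of_nat n2 * (\<Sum>i<n2. \<Sum>j<n2. Mi $$ (i, j))) \<cdot>\<^sub>m 1\<^sub>m n1 - of_nat n2 \<cdot>\<^sub>m A)"
proof -
  define J where "J = (all_ones_mat n2 n2 :: 'a mat)"
  define \<chi> where "\<chi> = (\<Sum>i<n2. \<Sum>j<n2. Mi $$ (i, j))"
  define Z where "Z = 1\<^sub>m n1 \<otimes>\<^sub>m J"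
  have Z: "Z \<in> carrier_mat (n1 * n2) (n1 * n2)"
    by (simp add: Z_def J_def)
  have "(1\<^sub>m n1 \<otimes>\<^sub>m M) * (1\<^sub>m n1 \<otimes>\<^sub>m Mi) = 1\<^sub>m (n1 * n2)"
    using mult_kronecker_mat[OF one_carrier_mat M one_carrier_mat Mi] M_Mi by simp
  then have "det (four_block_mat (a \<cdot>\<^sub>m 1\<^sub>m (n1 * n2) - A \<otimes>\<^sub>m J) (- Z) (- Z) (1\<^sub>m n1 \<otimes>\<^sub>m M))
      = det (1\<^sub>m n1 \<otimes>\<^sub>m M) * det (a \<cdot>\<^sub>m 1\<^sub>m (n1 * n2) - A \<otimes>\<^sub>m J - - Z * (1\<^sub>m n1 \<otimes>\<^sub>m Mi) * - Z)"
    using A M Mi Z by (intro det_four_block_mat_schur_lower_right) (auto simp: J_def)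
  also have "- Z * (1\<^sub>m n1 \<otimes>\<^sub>m Mi) * - Z = \<chi> \<cdot>\<^sub>m Z"
    using one_kronecker_all_ones_sandwich[OF Mi, of n1] carrier_matD[OF Z] carrier_matD[OF Mi]
    by (simp add: Z_def J_def \<chi>_def)
  also have "a \<cdot>\<^sub>m 1\<^sub>m (n1 * n2) - A \<otimes>\<^sub>m J - \<chi> \<cdot>\<^sub>m Z
      = a \<cdot>\<^sub>m 1\<^sub>m (n1 * n2) - (A + \<chi> \<cdot>\<^sub>m 1\<^sub>m n1) \<otimes>\<^sub>m J"
    using A \<open>0 < n2\<close>
    by (intro eq_matI) (auto simp: Z_def J_def div_mod_less_mult algebra_simps)
  also have "det \<dots> = a ^ (n1 * (n2 - 1)) * det (a \<cdot>\<^sub>m 1\<^sub>m n1 - of_nat n2 \<cdot>\<^sub>m (A + \<chi> \<cdot>\<^sub>m 1\<^sub>m n1))"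
    using A \<open>0 < n2\<close> by (simp add: J_def det_smult_one_minus_kronecker_all_ones)
  also have "a \<cdot>\<^sub>m 1\<^sub>m n1 - of_nat n2 \<cdot>\<^sub>m (A + \<chi> \<cdot>\<^sub>m 1\<^sub>m n1)
      = (a - of_nat n2 * \<chi>) \<cdot>\<^sub>m 1\<^sub>m n1 - of_nat n2 \<cdot>\<^sub>m A"
    using A by (intro eq_matI) (auto simp: algebra_simps)
  also have "det (1\<^sub>m n1 \<otimes>\<^sub>m M) = det M ^ n1"
    using M by (rule det_one_kronecker_mat)
  finally show ?thesis
    by (simp add: J_def Z_def \<chi>_def mult.assoc)
qed

lemma coronal_eq_sum_inverse:
  fixes Q :: "real mat"
  assumes Q: "Q \<in> carrier_mat n n" and x: "charf Q x \<noteq> 0"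
  obtains Mi where "Mi \<in> carrier_mat n n" and "(x \<cdot>\<^sub>m 1\<^sub>m n - Q) * Mi = 1\<^sub>m n"
    and "coronal Q x = (\<Sum>i<n. \<Sum>j<n. Mi $$ (i, j))"
proof -
  let ?M = "x \<cdot>\<^sub>m 1\<^sub>m n - Q"
  have M: "?M \<in> carrier_mat n n" using Q by auto
  have "det ?M \<noteq> 0" using x Q by (simp add: charf_def)
  then have "?M \<in> Units (ring_mat TYPE(real) n ())"
    by (rule det_non_zero_imp_unit[OF M])
  then obtain Mi where Mi: "mat_inverse ?M = Some Mi"
    using mat_inverse(1)[OF M] by fastforce
  then have "Mi \<in> carrier_mat n n" and "?M * Mi = 1\<^sub>m n"
    using mat_inverse(2)[OF M] by auto
  moreover have "coronal Q x = (\<Sum>i<n. \<Sum>j<n. Mi $$ (i, j))"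
    using Mi Q by (simp add: coronal_def)
  ultimately show ?thesis by (rule that)
qed

section \<open>The signless Laplacian of the product graph\<close>

lemma real_degree_eq_row_sum:
  assumes "i < n"
  shows "real (degree n E i) = (\<Sum>j\<in>{0..<n}. adj_matrix n E $$ (i, j))"
proof -
  have "{j. j < n \<and> E i j} = {j\<in>{0..<n}. E i j}" by auto
  then have "real (degree n E i) = (\<Sum>j\<in>{j\<in>{0..<n}. E i j}. 1)"
    by (simp add: degree_def)
  also have "\<dots> = (\<Sum>j\<in>{0..<n}. if E i j then 1 else 0)"
    by (rule sum.inter_filter) simp
  finally show ?thesis
    using assms by (simp add: adj_matrix_def)
qed

lemma dim_adj_matrix[simp]: "dim_row (adj_matrix n E) = n" "dim_col (adj_matrix n E) = n"
  by (simp_all add: adj_matrix_def)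

lemma index_adj_matrix[simp]: "i < n \<Longrightarrow> j < n \<Longrightarrow> adj_matrix n E $$ (i, j) = (if E i j then 1 else 0)"
  by (simp add: adj_matrix_def)

lemma index_signless_laplacian:
  "i < n \<Longrightarrow> j < n \<Longrightarrow> signless_laplacian n E $$ (i, j)
    = (if i = j then real (degree n E i) else 0) + adj_matrix n E $$ (i, j)"
  by (simp add: signless_laplacian_def deg_matrix_def adj_matrix_def mat_diag_def)

lemma dim_signless_laplacian[simp]:
  "dim_row (signless_laplacian n E) = n" "dim_col (signless_laplacian n E) = n"
  by (simp_all add: signless_laplacian_def deg_matrix_def adj_matrix_def)

lemma signless_laplacian_carrier_mat: "signless_laplacian n E \<in> carrier_mat n n"
  by (intro carrier_matI) simp_all

lemma signless_laplacian_regular: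
  assumes "regular_graph n E r"
  shows "signless_laplacian n E = real r \<cdot>\<^sub>m 1\<^sub>m n + adj_matrix n E"
  using assms unfolding regular_graph_def
  by (intro eq_matI) (auto simp: signless_laplacian_def deg_matrix_def adj_matrix_def mat_diag_def)

lemma add_ne_index_mult_add: "i < n1 \<Longrightarrow> k < n2 \<Longrightarrow> n1 * n2 + v \<noteq> i * n2 + (k::nat)"
  using index_mult_add_less[of i n1 k n2] by linarith

lemma prod_edge_a_a_iff:
  assumes u: "u < n1 * n2" and v: "v < n1 * n2"
  shows "prod_edge n1 E1 n2 E2 u v \<longleftrightarrow> E1 (u div n2) (v div n2)"
proof
  assume "E1 (u div n2) (v div n2)"
  moreover have "u = u div n2 * n2 + u mod n2" and "v = v div n2 * n2 + v mod n2" by simp_all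
  ultimately show "prod_edge n1 E1 n2 E2 u v"
    unfolding prod_edge_def using div_mod_less_mult[OF u] div_mod_less_mult[OF v] by blast
next
  assume "prod_edge n1 E1 n2 E2 u v"
  then have "\<exists>i<n1. \<exists>j<n1. \<exists>k<n2. \<exists>l<n2. E1 i j \<and> u = i * n2 + k \<and> v = j * n2 + l"
    unfolding prod_edge_def using u v by (auto simp: add_ne_index_mult_add)
  then show "E1 (u div n2) (v div n2)" by auto
qed

lemma prod_edge_a_b_iff:
  assumes u: "u < n1 * n2" and v: "v < n1 * n2"
  shows "prod_edge n1 E1 n2 E2 u (n1 * n2 + v) \<longleftrightarrow> u div n2 = v div n2"
proof
  assume "u div n2 = v div n2"
  then have "n1 * n2 + v = n1 * n2 + u div n2 * n2 + v mod n2"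
    by (simp add: add.assoc)
  moreover have "u = u div n2 * n2 + u mod n2" by simp
  ultimately show "prod_edge n1 E1 n2 E2 u (n1 * n2 + v)"
    unfolding prod_edge_def using div_mod_less_mult[OF u] div_mod_less_mult[OF v] by blast
next
  assume "prod_edge n1 E1 n2 E2 u (n1 * n2 + v)"
  then have "\<exists>i<n1. \<exists>p<n2. \<exists>q<n2. u = i * n2 + p \<and> v = i * n2 + q"
    unfolding prod_edge_def using u v by (auto simp: add_ne_index_mult_add)
  then show "u div n2 = v div n2" by auto
qed

lemma prod_edge_b_a_iff:
  assumes u: "u < n1 * n2" and v: "v < n1 * n2"
  shows "prod_edge n1 E1 n2 E2 (n1 * n2 + u) v \<longleftrightarrow> u div n2 = v div n2"
proof
  assume "u div n2 = v div n2"
  then have "n1 * n2 + u = n1 * n2 + v div n2 * n2 + u mod n2"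
    by (metis add.assoc div_mult_mod_eq)
  moreover have "v = v div n2 * n2 + v mod n2" by simp
  ultimately show "prod_edge n1 E1 n2 E2 (n1 * n2 + u) v"
    unfolding prod_edge_def using div_mod_less_mult[OF u] div_mod_less_mult[OF v] by blast
next
  assume "prod_edge n1 E1 n2 E2 (n1 * n2 + u) v"
  then have "\<exists>i<n1. \<exists>p<n2. \<exists>q<n2. v = i * n2 + p \<and> u = i * n2 + q"
    unfolding prod_edge_def using u v by (auto simp: add_ne_index_mult_add)
  then show "u div n2 = v div n2" by auto
qed

lemma prod_edge_b_b_iff:
  assumes u: "u < n1 * n2" and v: "v < n1 * n2"
  shows "prod_edge n1 E1 n2 E2 (n1 * n2 + u) (n1 * n2 + v)
    \<longleftrightarrow> u div n2 = v div n2 \<and> E2 (u mod n2) (v mod n2)"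
proof
  assume uv: "u div n2 = v div n2 \<and> E2 (u mod n2) (v mod n2)"
  then have "n1 * n2 + u = n1 * n2 + u div n2 * n2 + u mod n2"
    and "n1 * n2 + v = n1 * n2 + u div n2 * n2 + v mod n2"
    by (metis div_mult_mod_eq add.assoc)+
  then show "prod_edge n1 E1 n2 E2 (n1 * n2 + u) (n1 * n2 + v)"
    unfolding prod_edge_def using div_mod_less_mult[OF u] div_mod_less_mult[OF v] uv by blast
next
  assume "prod_edge n1 E1 n2 E2 (n1 * n2 + u) (n1 * n2 + v)"
  then have "\<exists>r<n1. \<exists>i<n2. \<exists>j<n2. E2 i j \<and> u = r * n2 + i \<and> v = r * n2 + j"
    unfolding prod_edge_def using u v by (auto simp: add_ne_index_mult_add)
  then show "u div n2 = v div n2 \<and> E2 (u mod n2) (v mod n2)" by auto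
qed

lemma adj_matrix_prod_edge:
  "adj_matrix (2 * n1 * n2) (prod_edge n1 E1 n2 E2)
    = four_block_mat (adj_matrix n1 E1 \<otimes>\<^sub>m all_ones_mat n2 n2) (1\<^sub>m n1 \<otimes>\<^sub>m all_ones_mat n2 n2)
        (1\<^sub>m n1 \<otimes>\<^sub>m all_ones_mat n2 n2) (1\<^sub>m n1 \<otimes>\<^sub>m adj_matrix n2 E2)"
  (is "_ = four_block_mat ?A ?Z ?Z ?B")
proof (rule eq_matI)
  let ?N = "n1 * n2"
  fix u v assume "u < dim_row (four_block_mat ?A ?Z ?Z ?B)" and "v < dim_col (four_block_mat ?A ?Z ?Z ?B)"
  then have u: "u < ?N + ?N" and v: "v < ?N + ?N" by (simp_all add: adj_matrix_def)
  consider (aa) "u < ?N" "v < ?N" | (ab) "u < ?N" "\<not> v < ?N"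
    | (ba) "\<not> u < ?N" "v < ?N" | (bb) "\<not> u < ?N" "\<not> v < ?N" by blast
  then show "adj_matrix (2 * n1 * n2) (prod_edge n1 E1 n2 E2) $$ (u, v) = four_block_mat ?A ?Z ?Z ?B $$ (u, v)"
  proof cases
    case aa
    then show ?thesis using u v prod_edge_a_a_iff[of u n1 n2 v]
      by (simp add: adj_matrix_def all_ones_mat_def div_mod_less_mult)
  next
    case ab
    then have "v - ?N < ?N" using v by linarith
    with ab show ?thesis using u v prod_edge_a_b_iff[of u n1 n2 "v - ?N"]
      by (simp add: adj_matrix_def all_ones_mat_def div_mod_less_mult)
  next
    case ba
    then have "u - ?N < ?N" using u by linarith
    with ba show ?thesis using u v prod_edge_b_a_iff[of "u - ?N" n1 n2 v]
      by (simp add: adj_matrix_def all_ones_mat_def div_mod_less_mult)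
  next
    case bb
    then have "u - ?N < ?N" "v - ?N < ?N" using u v by linarith+
    with bb show ?thesis using u v prod_edge_b_b_iff[of "u - ?N" n1 n2 "v - ?N"]
      by (simp add: adj_matrix_def all_ones_mat_def div_mod_less_mult)
  qed
qed (simp_all add: adj_matrix_def)

lemma real_degree_prod_edge:
  assumes G1: "regular_graph n1 E1 r1" and G2: "regular_graph n2 E2 r2" and u: "u < 2 * n1 * n2"
  shows "real (degree (2 * n1 * n2) (prod_edge n1 E1 n2 E2) u)
    = (if u < n1 * n2 then real r1 * real n2 + real n2 else real n2 + real r2)"
proof -
  let ?N = "n1 * n2"
  let ?J = "all_ones_mat n2 n2 :: real mat"
  let ?A = "four_block_mat (adj_matrix n1 E1 \<otimes>\<^sub>m ?J) (1\<^sub>m n1 \<otimes>\<^sub>m ?J) (1\<^sub>m n1 \<otimes>\<^sub>m ?J)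
    (1\<^sub>m n1 \<otimes>\<^sub>m adj_matrix n2 E2)"
  have A1: "adj_matrix n1 E1 \<in> carrier_mat n1 n1" and A2: "adj_matrix n2 E2 \<in> carrier_mat n2 n2"
    and J: "?J \<in> carrier_mat n2 n2"
    by (simp_all add: adj_matrix_def)
  note blocks = sum_row_four_block_mat[OF kronecker_carrier_mat[OF A1 J]
      kronecker_carrier_mat[OF one_carrier_mat J] kronecker_carrier_mat[OF one_carrier_mat J]
      kronecker_carrier_mat[OF one_carrier_mat A2]]
  have row_adj: "(\<Sum>j\<in>{0..<n}. adj_matrix n E $$ (i, j)) = real r"
    if "regular_graph n E r" and "i < n" for n E r i
    using that real_degree_eq_row_sum[of i n E] by (simp add: regular_graph_def)
  have row_one: "(\<Sum>j\<in>{0..<n1}. (1\<^sub>m n1 :: real mat) $$ (i, j)) = 1" if "i < n1" for i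
    using that by simp
  have row_J: "(\<Sum>j\<in>{0..<n2}. ?J $$ (i, j)) = real n2" if "i < n2" for i
    using that by simp
  have "real (degree (2 * n1 * n2) (prod_edge n1 E1 n2 E2) u)
      = (\<Sum>w\<in>{0..<2 * n1 * n2}. adj_matrix (2 * n1 * n2) (prod_edge n1 E1 n2 E2) $$ (u, w))"
    by (rule real_degree_eq_row_sum[OF u])
  also have "\<dots> = (\<Sum>w\<in>{0..<?N + ?N}. ?A $$ (u, w))"
    unfolding adj_matrix_prod_edge by (simp only: mult_2 distrib_right)
  also have "\<dots> = (if u < n1 * n2 then real r1 * real n2 + real n2 else real n2 + real r2)"
  proof (cases "u < ?N")
    case True
    note bounds = div_mod_less_mult[OF True]
    show ?thesis
      using True
      by (simp only: blocks(1)[OF True] sum_row_kronecker_mat[OF A1 J True]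
          sum_row_kronecker_mat[OF one_carrier_mat J True] row_adj[OF G1 bounds(1)]
          row_one[OF bounds(1)] row_J[OF bounds(2)] mult_1 if_True)
  next
    case False
    then have u': "u - ?N < ?N" and shift: "?N + (u - ?N) = u" using u by simp_all
    note bounds = div_mod_less_mult[OF u']
    show ?thesis
      using False
      by (simp only: blocks(2)[OF u', unfolded shift] sum_row_kronecker_mat[OF one_carrier_mat J u']
          sum_row_kronecker_mat[OF one_carrier_mat A2 u'] row_one[OF bounds(1)]
          row_J[OF bounds(2)] row_adj[OF G2 bounds(2)] mult_1 if_False)
  qed
  finally show ?thesis .
qed

lemma char_matrix_signless_laplacian_prod_edge:
  assumes G1: "regular_graph n1 E1 r1" and G2: "regular_graph n2 E2 r2"
  shows "x \<cdot>\<^sub>m 1\<^sub>m (2 * n1 * n2) - signless_laplacian (2 * n1 * n2) (prod_edge n1 E1 n2 E2)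
    = four_block_mat
        ((x - real r1 * real n2 - real n2) \<cdot>\<^sub>m 1\<^sub>m (n1 * n2) - adj_matrix n1 E1 \<otimes>\<^sub>m all_ones_mat n2 n2)
        (- (1\<^sub>m n1 \<otimes>\<^sub>m all_ones_mat n2 n2)) (- (1\<^sub>m n1 \<otimes>\<^sub>m all_ones_mat n2 n2))
        (1\<^sub>m n1 \<otimes>\<^sub>m ((x - real n2) \<cdot>\<^sub>m 1\<^sub>m n2 - signless_laplacian n2 E2))"
  (is "_ = four_block_mat ?A ?Z ?Z ?B")
proof (rule eq_matI)
  let ?N = "n1 * n2"
  have Q2: "signless_laplacian n2 E2 = real r2 \<cdot>\<^sub>m 1\<^sub>m n2 + adj_matrix n2 E2"
    by (rule signless_laplacian_regular[OF G2])
  fix u v assume "u < dim_row (four_block_mat ?A ?Z ?Z ?B)" and "v < dim_col (four_block_mat ?A ?Z ?Z ?B)"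
  then have u: "u < ?N + ?N" and v: "v < ?N + ?N" by simp_all
  then have uv: "u < 2 * n1 * n2" "v < 2 * n1 * n2" by simp_all
  note entries = index_signless_laplacian adj_matrix_prod_edge Q2
  note degrees = real_degree_prod_edge[OF G1 G2 uv(1)] real_degree_prod_edge[OF G1 G2 uv(2)]
  consider (aa) "u < ?N" "v < ?N" | (ab) "u < ?N" "\<not> v < ?N"
    | (ba) "\<not> u < ?N" "v < ?N" | (bb) "\<not> u < ?N" "\<not> v < ?N" by blast
  then show "(x \<cdot>\<^sub>m 1\<^sub>m (2 * n1 * n2) - signless_laplacian (2 * n1 * n2) (prod_edge n1 E1 n2 E2)) $$ (u, v)
    = four_block_mat ?A ?Z ?Z ?B $$ (u, v)"
  proof cases
    case aa
    then show ?thesis using uv degrees div_mod_less_mult[OF aa(1)] div_mod_less_mult[OF aa(2)]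
      by (auto simp: entries)
  next
    case ab
    then have v': "v - ?N < ?N" using v by linarith
    with ab show ?thesis using uv degrees div_mod_less_mult[OF ab(1)] div_mod_less_mult[OF v']
      by (auto simp: entries)
  next
    case ba
    then have u': "u - ?N < ?N" using u by linarith
    with ba show ?thesis using uv degrees div_mod_less_mult[OF ba(2)] div_mod_less_mult[OF u']
      by (auto simp: entries)
  next
    case bb
    then have u': "u - ?N < ?N" and v': "v - ?N < ?N" using u v by linarith+
    have "u = v \<longleftrightarrow> (u - ?N) div n2 = (v - ?N) div n2 \<and> (u - ?N) mod n2 = (v - ?N) mod n2"
      using bb div_mod_eq_imp_eq[of "u - ?N" n2 "v - ?N"] by auto
    with bb show ?thesis using uv degrees div_mod_less_mult[OF u'] div_mod_less_mult[OF v']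
      by (auto simp: entries)
  qed
qed simp_all

theorem theorem2:
  fixes n1 n2 r1 r2 :: nat and E1 E2 :: "nat \<Rightarrow> nat \<Rightarrow> bool" and \<nu> :: "nat \<Rightarrow> real"
    and x :: real
  assumes n1: "n1 \<ge> 1" and n2: "n2 \<ge> 1"
    and G1: "regular_graph n1 E1 r1"
    and G2: "regular_graph n2 E2 r2"
    and eig: "char_poly (signless_laplacian n1 E1) = (\<Prod>i<n1. [:- \<nu> i, 1:])"
    and x_ok: "charf (signless_laplacian n2 E2) (x - real n2) \<noteq> 0"
  shows "charf (signless_laplacian (2*n1*n2) (prod_edge n1 E1 n2 E2)) x =
     (x - real r1 * real n2 - real n2) ^ (n1 * (n2 - 1))
     * (charf (signless_laplacian n2 E2) (x - real n2)) ^ n1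
     * (\<Prod>i<n1. x - real n2 - real n2 * \<nu> i
          - real n2 * coronal (signless_laplacian n2 E2) (x - real n2))"
proof -
  let ?Q1 = "signless_laplacian n1 E1" and ?Q2 = "signless_laplacian n2 E2"
  let ?M = "(x - real n2) \<cdot>\<^sub>m 1\<^sub>m n2 - ?Q2"
  obtain Mi where Mi: "Mi \<in> carrier_mat n2 n2" and M_Mi: "?M * Mi = 1\<^sub>m n2"
    and coronal: "coronal ?Q2 (x - real n2) = (\<Sum>i<n2. \<Sum>j<n2. Mi $$ (i, j))"
    using coronal_eq_sum_inverse[OF signless_laplacian_carrier_mat x_ok] .
  define \<chi> where "\<chi> = (\<Sum>i<n2. \<Sum>j<n2. Mi $$ (i, j))"
  have A1: "adj_matrix n1 E1 \<in> carrier_mat n1 n1" by (simp add: adj_matrix_def)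
  have M: "?M \<in> carrier_mat n2 n2" by (intro carrier_matI) simp_all
  have "charf (signless_laplacian (2*n1*n2) (prod_edge n1 E1 n2 E2)) x
      = det (four_block_mat
        ((x - real r1 * real n2 - real n2) \<cdot>\<^sub>m 1\<^sub>m (n1 * n2) - adj_matrix n1 E1 \<otimes>\<^sub>m all_ones_mat n2 n2)
        (- (1\<^sub>m n1 \<otimes>\<^sub>m all_ones_mat n2 n2)) (- (1\<^sub>m n1 \<otimes>\<^sub>m all_ones_mat n2 n2)) (1\<^sub>m n1 \<otimes>\<^sub>m ?M))"
    by (simp add: charf_def char_matrix_signless_laplacian_prod_edge[OF G1 G2])
  also have "\<dots> = det ?M ^ n1 * (x - real r1 * real n2 - real n2) ^ (n1 * (n2 - 1))
        * det ((x - real r1 * real n2 - real n2 - real n2 * \<chi>) \<cdot>\<^sub>m 1\<^sub>m n1 - real n2 \<cdot>\<^sub>m adj_matrix n1 E1)"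
    using n2 by (simp add: det_four_block_kronecker_all_ones[OF A1 M Mi M_Mi] \<chi>_def)
  also have "(x - real r1 * real n2 - real n2 - real n2 * \<chi>) \<cdot>\<^sub>m 1\<^sub>m n1 - real n2 \<cdot>\<^sub>m adj_matrix n1 E1
      = (x - real n2 - real n2 * \<chi>) \<cdot>\<^sub>m 1\<^sub>m n1 - real n2 \<cdot>\<^sub>m ?Q1"
    by (intro eq_matI) (auto simp: signless_laplacian_regular[OF G1] adj_matrix_def algebra_simps)
  also have "det \<dots> = (\<Prod>i<n1. x - real n2 - real n2 * \<nu> i - real n2 * \<chi>)"
    using det_smult_one_minus_smult_eq_prod[OF signless_laplacian_carrier_mat eig, of "real n2"] n2
    by (simp add: algebra_simps)
  also have "det ?M = charf ?Q2 (x - real n2)"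
    by (simp add: charf_def)
  finally show ?thesis
    by (simp add: coronal \<chi>_def mult_ac)
qed

end
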